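(* Let $\mathcal A\subset\mathbb R^d$ be finite and nonempty, $\mathcal D=\mathrm{conv}(\mathcal A)$, and let $f$ be convex and differentiable on an open set containing $\mathcal D$. Let $x^*\in\arg\min_{\mathcal D}f$ and let $x\in\mathcal D$ with $f(x)>f(x^* )$. Let $S\in\mathcal S_x(\mathcal A)$ be an active set for $x$, $r:=-\nabla f(x)$ and $\hat e:=(x^*-x)/\|x^*-x\|$ (so that $\langle r,\hat e\rangle>0$). Let $s\in\arg\max_{a\in\mathcal A}\langle r,a\rangle$, $v\in\arg\min_{a\in S}\langle r,a\rangle$ and $d:=s-v$ (the pairwise Frank-Wolfe direction). Then $$\frac{\langle r,d\rangle}{\langle r,\hat e\rangle}\ \ge\ \mathrm{PWidth}(\mathcal A).$$
   Context: Euclidean norm and inner product. For a finite set $\mathcal B\subseteq\mathbb R^d$ and $x\in\mathrm{conv}(\mathcal B)$, $\mathcal S_x(\mathcal B)$ is the family of subsets $S\subseteq\mathcal B$ such that $x$ is a proper convex combination of all elements of $S$ ($x=\sum_{v\in S}\alpha_vv$, all $\alpha_v>0$, $\sum\alpha_v=1$). For $r\ne0$, the pyramidal directional width is $\mathrm{PdirW}(\mathcal B,r,x):=\min_{S\in\mathcal S_x(\mathcal B)}\max_{s\in\mathcal B,\,v\in S}\langle r/\|r\|,s-v\rangle$. The pyramidal width of $\mathcal A$ is $\mathrm{PWidth}(\mathcal A):=\inf\{\mathrm{PdirW}(\mathcal K\cap\mathcal A,r,x)\}$, the infimum over all nonempty faces $\mathcal K$ of the polytope $\mathrm{conv}(\mathcal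 A)$ (including $\mathrm{conv}(\mathcal A)$ itself), all $x\in\mathcal K$, and all $r\in\mathrm{cone}(\mathcal K-x)\setminus\{0\}$, where $\mathrm{cone}(\mathcal K-x)=\{\sum_i\lambda_i(y_i-x):\lambda_i\ge0,\ y_i\in\mathcal K\}$. *)

theory Defs
  imports "HOL-Analysis.Analysis"
begin

definition active_sets :: "'a::euclidean_space set \<Rightarrow> 'a \<Rightarrow> 'a set set" where
  "active_sets B x = {S. S \<subseteq> B \<and> finite S \<and>
      (\<exists>\<alpha>::'a \<Rightarrow> real. (\<forall>v\<in>S. \<alpha> v > 0) \<and> sum \<alpha> S = 1 \<and> (\<Sum>v\<in>S. \<alpha> v *\<^sub>R v) = x)}"

definition PdirW :: "'a::euclidean_space set \<Rightarrow> 'a \<Rightarrow> 'a \<Rightarrow> real" where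
  "PdirW B r x = (INF S\<in>active_sets B x.
      (SUP p\<in>B \<times> S. (r /\<^sub>R norm r) \<bullet> (fst p - snd p)))"

definition cone_of :: "'a::euclidean_space set \<Rightarrow> 'a \<Rightarrow> 'a set" where
  "cone_of K x = {z. \<exists>F c. finite F \<and> F \<subseteq> K \<and> (\<forall>y\<in>F. c y \<ge> (0::real)) \<and>
      z = (\<Sum>y\<in>F. c y *\<^sub>R (y - x))}"

definition PWidth :: "'a::euclidean_space set \<Rightarrow> real" where
  "PWidth A = Inf {PdirW (K \<inter> A) r x | K x r.
      K face_of convex hull A \<and> K \<noteq> {} \<and> x \<in> K \<and> r \<in> cone_of K x \<and> r \<noteq> 0}"

end

theory Submission
  imports Defs
begin

text \<open>By convexity, r = -\<nabla>f(x) has positive inner product with e = (x* - x) / \<parallel>x* - x\<parallel>.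
  Split r = p + n by projecting onto the tangent cone T of conv A at x (Moreau): p \<in> T,
  n \<perp> p and n \<le> 0 on T. Then \<langle>r, e\<rangle> \<le> \<langle>p, e\<rangle> \<le> \<parallel>p\<parallel>, and the hyperplane {y. n \<bullet> y = n \<bullet> x}
  supports conv A in a face K that contains x, the active set S and the direction p. On K the
  functionals r and p agree on differences, so the pyramidal directional width of K in
  direction p is at most \<langle>r, s - v\<rangle> / \<parallel>p\<parallel>.\<close>

lemma convex_on_above_derivative:
  fixes f :: "'a::real_normed_vector \<Rightarrow> real"
  assumes convex: "convex_on U f" and "x \<in> U" "y \<in> U"
    and deriv: "(f has_derivative f') (at x)"
  shows "f' (y - x) \<le> f y - f x"
proof -
  define d where "d = y - x"
  have "((\<lambda>t::real. x + t *\<^sub>R d) has_derivative (\<lambda>t. t *\<^sub>R d)) (at 0)"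
    by (auto intro!: derivative_eq_intros)
  with deriv have "((\<lambda>t. f (x + t *\<^sub>R d)) has_derivative (\<lambda>t. f' (t *\<^sub>R d))) (at 0)"
    using diff_chain_at[of "\<lambda>t::real. x + t *\<^sub>R d" "\<lambda>t. t *\<^sub>R d" 0 f f'] by (simp add: o_def)
  moreover have "(\<lambda>t. f' (t *\<^sub>R d)) = (\<lambda>t. f' d * t)"
    using linear_scale[OF has_derivative_linear[OF deriv]] by (auto simp: mult.commute)
  ultimately have "((\<lambda>t. f (x + t *\<^sub>R d)) has_field_derivative f' d) (at 0)"
    by (simp add: has_field_derivative_def)
  hence lim: "((\<lambda>t. (f (x + t *\<^sub>R d) - f x) / t) \<longlongrightarrow> f' d) (at_right 0)"
    unfolding has_field_derivative_iff by (auto intro: tendsto_mono at_le)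
  have "\<forall>\<^sub>F t in at_right 0. (f (x + t *\<^sub>R d) - f x) / t \<le> f y - f x"
    using eventually_at_right_real[OF zero_less_one]
  proof eventually_elim
    fix t :: real assume t: "t \<in> {0<..<1}"
    have "x + t *\<^sub>R d = (1 - t) *\<^sub>R x + t *\<^sub>R y" by (simp add: d_def algebra_simps)
    hence "f (x + t *\<^sub>R d) \<le> (1 - t) * f x + t * f y"
      using convex_onD[OF convex] t assms(2,3) by simp
    thus "(f (x + t *\<^sub>R d) - f x) / t \<le> f y - f x"
      using t by (simp add: pos_divide_le_eq[of t] algebra_simps del: le_diff_eq diff_le_eq)
  qed
  from tendsto_upperbound[OF lim this] show ?thesis by (simp add: d_def)
qed

lemma closest_point_convex_cone:
  fixes T :: "'a::euclidean_space set"
  assumes "closed T" "convex_cone T"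
  shows "closest_point T r \<in> T"
    and "(r - closest_point T r) \<bullet> closest_point T r = 0"
    and "\<And>t. t \<in> T \<Longrightarrow> (r - closest_point T r) \<bullet> t \<le> 0"
proof -
  define p where "p = closest_point T r"
  have T0: "0 \<in> T" using assms(2) by (simp add: convex_cone_iff)
  have "convex T" using assms(2) by (simp add: convex_cone_def)
  have dot: "(r - p) \<bullet> (t - p) \<le> 0" if "t \<in> T" for t
    unfolding p_def using closest_point_dot[OF \<open>convex T\<close> assms(1) that] .
  show pT: "closest_point T r \<in> T" using closest_point_in_set[OF assms(1)] T0 by blast
  have "(2::real) *\<^sub>R p \<in> T" using assms(2) pT by (simp add: convex_cone_scaleR p_def)
  from dot[OF this] dot[OF T0] show "(r - closest_point T r) \<bullet> closest_point T r = 0"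
    unfolding p_def by (simp add: algebra_simps)
  with dot show "(r - closest_point T r) \<bullet> t \<le> 0" if "t \<in> T" for t
    using that by (simp add: p_def inner_diff_right)
qed

lemma convex_cone_hull_translated:
  "convex_cone hull ((\<lambda>a. a - x) ` A) = insert 0 {c *\<^sub>R (z - x) | c z. 0 \<le> c \<and> z \<in> convex hull A}"
proof -
  have translate: "(\<lambda>a. a - x) = (\<lambda>a. -x + a)" by auto
  have "convex hull ((\<lambda>a. a - x) ` A) = (\<lambda>a. a - x) ` (convex hull A)"
    unfolding translate by (rule convex_hull_translation)
  thus ?thesis unfolding convex_cone_hull_separate conic_hull_explicit by auto
qed

lemma tangent_cone_projection:
  fixes A :: "'a::euclidean_space set"
  assumes "finite A"
  obtains p n where "r = p + n" "n \<bullet> p = 0" "\<And>y. y \<in> convex hull A \<Longrightarrow> n \<bullet> y \<le> n \<bullet> x"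
    and "p \<in> cone_of (convex hull A \<inter> {y. n \<bullet> y = n \<bullet> x}) x"
proof -
  define T where "T = convex_cone hull ((\<lambda>a. a - x) ` A)"
  have T_eq: "T = insert 0 {c *\<^sub>R (z - x) | c z. 0 \<le> c \<and> z \<in> convex hull A}"
    unfolding T_def by (rule convex_cone_hull_translated)
  have closed: "closed T" unfolding T_def using assms by (simp add: closed_convex_cone_hull)
  have cone: "convex_cone T" unfolding T_def by (simp add: convex_cone_convex_cone_hull)
  define p where "p = closest_point T r"
  define n where "n = r - p"
  note projection = closest_point_convex_cone[OF closed cone, where r=r, folded p_def, folded n_def]
  have pT: "p \<in> T" and np: "n \<bullet> p = 0" and nT: "\<And>t. t \<in> T \<Longrightarrow> n \<bullet> t \<le> 0"
    using projection by auto
  have nD: "n \<bullet> y \<le> n \<bullet> x" if "y \<in> convex hull A" for y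
    using nT[of "1 *\<^sub>R (y - x)"] that unfolding T_eq by (fastforce simp: inner_diff_right)
  define K where "K = convex hull A \<inter> {y. n \<bullet> y = n \<bullet> x}"
  have "p \<in> cone_of K x"
  proof (cases "p = 0")
    case True
    show ?thesis unfolding True cone_of_def by (auto intro!: exI[of _ "{}"])
  next
    case False
    then obtain c z where cz: "p = c *\<^sub>R (z - x)" "0 < c" "z \<in> convex hull A"
      using pT unfolding T_eq p_def by fastforce
    from np have "n \<bullet> z = n \<bullet> x"
      using \<open>0 < c\<close> unfolding cz(1) by (simp add: inner_diff_right)
    with cz have "z \<in> K" unfolding K_def by simp
    with cz show ?thesis
      unfolding cone_of_def by (auto intro!: exI[of _ "{z}"] exI[of _ "\<lambda>_. c"])
  qed
  show thesis
    by (rule that[of p n]) (use np nD \<open>p \<in> cone_of K x\<close> in \<open>auto simp: n_def K_def\<close>)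
qed

lemma active_sets_nonempty: "S \<in> active_sets B x \<Longrightarrow> S \<noteq> {}"
  by (auto simp: active_sets_def)

lemma finite_active_sets: "finite B \<Longrightarrow> finite (active_sets B x)"
  by (rule finite_subset[of _ "Pow B"]) (auto simp: active_sets_def)

lemma active_set_in_supporting_hyperplane:
  fixes n :: "'a::euclidean_space"
  assumes "S \<in> active_sets B x" and supp: "\<And>b. b \<in> B \<Longrightarrow> n \<bullet> b \<le> n \<bullet> x" and "b \<in> S"
  shows "n \<bullet> b = n \<bullet> x"
proof -
  obtain \<alpha> where S: "S \<subseteq> B" "finite S" "\<forall>u\<in>S. \<alpha> u > 0" "sum \<alpha> S = 1" "(\<Sum>u\<in>S. \<alpha> u *\<^sub>R u) = x"
    using assms(1) unfolding active_sets_def by blast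
  have "(\<Sum>u\<in>S. \<alpha> u * (n \<bullet> x - n \<bullet> u)) = sum \<alpha> S * (n \<bullet> x) - n \<bullet> (\<Sum>u\<in>S. \<alpha> u *\<^sub>R u)"
    by (simp add: algebra_simps sum_subtractf sum_distrib_right inner_sum_right)
  also have "\<dots> = 0" using S(4,5) by simp
  finally have "\<alpha> b * (n \<bullet> x - n \<bullet> b) = 0"
    using sum_nonneg_eq_0_iff[OF S(2)] S(1,3) supp \<open>b \<in> S\<close>
    by (smt (verit) mult_nonneg_nonneg subsetD)
  thus ?thesis using S(3) \<open>b \<in> S\<close> by force
qed

lemma PdirW_le:
  assumes "finite B" "S \<in> active_sets B x"
    and "\<And>a b. a \<in> B \<Longrightarrow> b \<in> S \<Longrightarrow> (r /\<^sub>R norm r) \<bullet> (a - b) \<le> c"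
  shows "PdirW B r x \<le> c"
proof -
  have "finite S" "S \<subseteq> B" "S \<noteq> {}"
    using assms(2) active_sets_nonempty by (auto simp: active_sets_def)
  have "PdirW B r x \<le> (SUP q\<in>B \<times> S. (r /\<^sub>R norm r) \<bullet> (fst q - snd q))"
    unfolding PdirW_def
    by (rule cINF_lower[OF _ assms(2)]) (intro bdd_below_finite finite_imageI finite_active_sets assms(1))
  also have "\<dots> \<le> c"
    by (rule cSUP_least) (use \<open>S \<subseteq> B\<close> \<open>S \<noteq> {}\<close> assms(3) in auto)
  finally show ?thesis .
qed

lemma PdirW_nonneg:
  assumes "finite B" "active_sets B x \<noteq> {}"
  shows "0 \<le> PdirW B r x"
  unfolding PdirW_def
proof (rule cINF_greatest[OF assms(2)])
  fix S assume S: "S \<in> active_sets B x"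
  then obtain b where "b \<in> S" using active_sets_nonempty by blast
  moreover have "finite S" "S \<subseteq> B" using S by (auto simp: active_sets_def)
  ultimately show "0 \<le> (SUP q\<in>B \<times> S. (r /\<^sub>R norm r) \<bullet> (fst q - snd q))"
    using assms(1) by (intro cSUP_upper2[of _ _ "(b, b)"]) auto
qed

lemma PWidth_le_PdirW:
  fixes A :: "'a::euclidean_space set"
  assumes "finite A" "K face_of convex hull A" "K \<noteq> {}" "x \<in> K" "r \<in> cone_of K x" "r \<noteq> 0"
  shows "PWidth A \<le> PdirW (K \<inter> A) r x"
  unfolding PWidth_def
proof (rule cInf_lower)
  show "PdirW (K \<inter> A) r x \<in> {PdirW (K \<inter> A) r x |K x r. K face_of convex hull A \<and> K \<noteq> {}
      \<and> x \<in> K \<and> r \<in> cone_of K x \<and> r \<noteq> 0}"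
    using assms(2-) by blast
  \<comment> \<open>Without active sets, PdirW is the junk value \<open>Inf {}\<close>.\<close>
  have "min (Inf {}) 0 \<le> PdirW (K' \<inter> A) r' x'" for K' r' and x' :: 'a
    using PdirW_nonneg[of "K' \<inter> A" x' r'] assms(1) by (cases "active_sets (K' \<inter> A) x' = {}") (auto simp: PdirW_def)
  then show "bdd_below {PdirW (K \<inter> A) r x |K x r. K face_of convex hull A \<and> K \<noteq> {}
      \<and> x \<in> K \<and> r \<in> cone_of K x \<and> r \<noteq> 0}"
    unfolding bdd_below_def by blast
qed

lemma PWidth_le_pairwise_gap:
  fixes A :: "'a::euclidean_space set"
  assumes "finite A" "x \<in> convex hull A" "S \<in> active_sets A x"
    and "s \<in> A" "\<And>a. a \<in> A \<Longrightarrow> r \<bullet> a \<le> r \<bullet> s"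
    and "v \<in> S" "\<And>a. a \<in> S \<Longrightarrow> r \<bullet> v \<le> r \<bullet> a"
    and "y \<in> convex hull A" "r \<bullet> (y - x) > 0"
  shows "PWidth A \<le> r \<bullet> (s - v) / (r \<bullet> ((y - x) /\<^sub>R norm (y - x)))"
proof -
  obtain p n where r: "r = p + n" and "n \<bullet> p = 0"
    and supp: "\<And>z. z \<in> convex hull A \<Longrightarrow> n \<bullet> z \<le> n \<bullet> x"
    and p_cone: "p \<in> cone_of (convex hull A \<inter> {z. n \<bullet> z = n \<bullet> x}) x"
    using tangent_cone_projection[OF assms(1), where r=r and x=x] by blast
  define K where "K = convex hull A \<inter> {z. n \<bullet> z = n \<bullet> x}"
  define w where "w = r \<bullet> ((y - x) /\<^sub>R norm (y - x))"
  have "K face_of convex hull A"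
    unfolding K_def by (rule face_of_Int_supporting_hyperplane_le) (use supp in auto)
  have "S \<subseteq> A" using assms(3) by (simp add: active_sets_def)
  have SK: "S \<subseteq> K"
  proof
    fix b assume "b \<in> S"
    with \<open>S \<subseteq> A\<close> have "b \<in> convex hull A" by (auto intro: hull_inc)
    moreover have "n \<bullet> b = n \<bullet> x"
      using active_set_in_supporting_hyperplane[OF assms(3) _ \<open>b \<in> S\<close>] supp hull_inc by metis
    ultimately show "b \<in> K" unfolding K_def by simp
  qed
  have "r \<bullet> (y - x) \<le> p \<bullet> (y - x)"
    using supp[OF assms(8)] unfolding r by (simp add: inner_add_left inner_diff_right)
  also have "\<dots> \<le> norm p * norm (y - x)" by (rule norm_cauchy_schwarz)
  finally have rp: "r \<bullet> (y - x) \<le> norm p * norm (y - x)" .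
  have "y \<noteq> x" using assms(9) by auto
  have w_eq: "w = r \<bullet> (y - x) / norm (y - x)"
    by (simp add: w_def divide_inverse mult.commute)
  have "w > 0" using assms(9) \<open>y \<noteq> x\<close> by (simp add: w_eq)
  have "w \<le> norm p" "p \<noteq> 0"
    using rp assms(9) \<open>y \<noteq> x\<close> by (auto simp: w_eq pos_divide_le_eq)
  \<comment> \<open>On the face K the functional n is constant, so p and r agree on differences of points of K.\<close>
  have "PdirW (K \<inter> A) p x \<le> r \<bullet> (s - v) / norm p"
  proof (rule PdirW_le)
    show "S \<in> active_sets (K \<inter> A) x"
      using assms(3) SK by (auto simp: active_sets_def)
    fix a b assume "a \<in> K \<inter> A" "b \<in> S"
    hence "p \<bullet> (a - b) = r \<bullet> (a - b)"
      using SK unfolding r K_def by (auto simp: inner_add_left inner_diff_right)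
    also have "\<dots> \<le> r \<bullet> (s - v)"
      using assms(5)[of a] assms(7)[OF \<open>b \<in> S\<close>] \<open>a \<in> K \<inter> A\<close> by (simp add: inner_diff_right)
    finally show "(p /\<^sub>R norm p) \<bullet> (a - b) \<le> r \<bullet> (s - v) / norm p"
      using \<open>p \<noteq> 0\<close> by (simp add: divide_right_mono divide_inverse_commute[symmetric] mult.commute)
  qed (use assms(1) in simp)
  also have "\<dots> \<le> r \<bullet> (s - v) / w"
    using assms(5)[of v] \<open>S \<subseteq> A\<close> assms(6) \<open>w > 0\<close> \<open>w \<le> norm p\<close>
    by (intro divide_left_mono) (auto simp: inner_diff_right zero_less_mult_iff)
  finally have "PdirW (K \<inter> A) p x \<le> r \<bullet> (s - v) / w" .
  moreover have "PWidth A \<le> PdirW (K \<inter> A) p x"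
    using PWidth_le_PdirW[OF assms(1) \<open>K face_of convex hull A\<close> _ _ _ \<open>p \<noteq> 0\<close>] assms(2) p_cone
    unfolding K_def by auto
  ultimately show ?thesis by (simp add: w_def)
qed

theorem theorem3:
  fixes A :: "'a::euclidean_space set" and f :: "'a \<Rightarrow> real" and grad :: "'a \<Rightarrow> 'a"
    and U :: "'a set" and xstar x s v :: 'a and S :: "'a set"
  assumes "finite A" and "A \<noteq> {}"
    and "open U" and "convex hull A \<subseteq> U"
    and "convex_on U f"
    and "\<And>y. y \<in> U \<Longrightarrow> (f has_derivative (\<lambda>h. grad y \<bullet> h)) (at y)"
    and "xstar \<in> convex hull A" and "\<And>y. y \<in> convex hull A \<Longrightarrow> f xstar \<le> f y"
    and "x \<in> convex hull A" and "f x > f xstar"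
    and "S \<in> active_sets A x"
    and "s \<in> A" and "\<And>a. a \<in> A \<Longrightarrow> (- grad x) \<bullet> a \<le> (- grad x) \<bullet> s"
    and "v \<in> S" and "\<And>a. a \<in> S \<Longrightarrow> (- grad x) \<bullet> v \<le> (- grad x) \<bullet> a"
  shows "((- grad x) \<bullet> (s - v)) / ((- grad x) \<bullet> ((xstar - x) /\<^sub>R norm (xstar - x)))
           \<ge> PWidth A"
proof -
  have "x \<in> U" "xstar \<in> U" using assms(4,7,9) by auto
  hence "grad x \<bullet> (xstar - x) \<le> f xstar - f x"
    using convex_on_above_derivative[OF assms(5)] assms(6) by blast
  hence "(- grad x) \<bullet> (xstar - x) > 0" using assms(10) by simp
  with assms(1,9,11-15,7) show ?thesis
    by (intro PWidth_le_pairwise_gap) auto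
qed

end
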